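(* In the construction described in the context, for every $i\in\{1,\dots,t-1\}$ there exists a vertex $v_i\in V_{cc}$ with $v_i\in X_i$ and $v_i\notin X_j$ for all $j<i$. Moreover, there exists a vertex $u\in V_{cc}$ with $u\notin X_j$ for all $j\in\{1,\dots,t-1\}$.
   Context: Setting: $G=(V,E)$ is a connected finite undirected graph (parallel edges allowed), $w:E\to\mathbb{R}_{\ge0}$ edge weights, $c:E\to\mathbb{R}_{>0}$ edge costs, $n=|V|$. For $S\subseteq V$, $C_G(S)=\{e\in E:|e\cap S|=1\}$ (complete cut; its edges cross it) and $C_G(S,W)=\{e\in C_G(S):w(e)<W\}$ (partial cut). $F\subseteq E$ is a set with $G'=G\setminus F=(V,E\setminus F)$ connected; $B=c(F)$ and $\Delta=\mathrm{MST}(G')-\mathrm{MST}(G)$ (MST weights w.r.t. $w$). Construction: let $T$ be a minimum spanning tree of $G$ and $T\cap F=\{e_1,\dots,e_{t-1}\}$, with $t\ge2$. Removing these edges splits $T$ into components with vertex sets $A_1,\dots,A_t$ (a partition of $V$). Let $G'_{cc}$ be the multigraph with vertex set $V_{cc}=\{A_1,\dots,A_t\}$ having, for every edge $\{u,v\}\in E\setminus F$ with $u\in A_i$, $v\in A_j$, an edge between $A_i$ and $A_j$ of weight $w(\{u,v\})$ (identified with the original edge). Let $T'_{cc}$ be a minimum spanning tree of $G'_{cc}$, with edges $e'_1,\dots,e'_{t-1}$ indexed so that $w(e'_1)\le\dots\le w(e'_{t-1})$ (ties broken arbitrarily). For each $i$, deleting $e'_i,e'_{i+1},\dots,e'_{t-1}$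 from $T'_{cc}$ leaves a forest in which $e'_i$ joins two components $L_i,R_i\subseteq V_{cc}$. Counters $k(A)=0$ for all $A\in V_{cc}$ initially, and $k(S)=\max_{A\in S}k(A)$. For $i=1,\dots,t-1$ in order: set $X_i=L_i$ if $k(L_i)\le k(R_i)$, else $X_i=R_i$; then increase $k(A)$ by $1$ for every $A\in X_i$. Identifying a set of vertices of $G'_{cc}$ with the union of the corresponding vertex sets in $V$, define $C_i=C_G(X_i,w(e'_i))$. *)

theory Defs
  imports Complex_Main
begin

text \<open>Multigraphs: edges are abstract identifiers of type 'e, with an endpoint map
  ends :: 'e => 'v set (a loop has a singleton endpoint set).\<close>

definition adj :: "('e \<Rightarrow> 'v set) \<Rightarrow> 'e set \<Rightarrow> ('v \<times> 'v) set" where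
  "adj ends S = {(x, y). \<exists>e\<in>S. ends e = {x, y}}"

definition conn :: "'v set \<Rightarrow> ('e \<Rightarrow> 'v set) \<Rightarrow> 'e set \<Rightarrow> bool" where
  "conn V ends S \<longleftrightarrow> (\<forall>x\<in>V. \<forall>y\<in>V. (x, y) \<in> (adj ends S)\<^sup>*)"

definition forest :: "('e \<Rightarrow> 'v set) \<Rightarrow> 'e set \<Rightarrow> bool" where
  "forest ends S \<longleftrightarrow> (\<forall>e\<in>S. \<forall>x y. ends e = {x, y} \<longrightarrow> x \<noteq> y \<and> (x, y) \<notin> (adj ends (S - {e}))\<^sup>*)"

definition spanning_tree :: "'v set \<Rightarrow> 'e set \<Rightarrow> ('e \<Rightarrow> 'v set) \<Rightarrow> 'e set \<Rightarrow> bool" where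
  "spanning_tree V E ends T \<longleftrightarrow> T \<subseteq> E \<and> conn V ends T \<and> forest ends T"

definition is_MST :: "'v set \<Rightarrow> 'e set \<Rightarrow> ('e \<Rightarrow> 'v set) \<Rightarrow> ('e \<Rightarrow> real) \<Rightarrow> 'e set \<Rightarrow> bool" where
  "is_MST V E ends w T \<longleftrightarrow> spanning_tree V E ends T \<and>
     (\<forall>T'. spanning_tree V E ends T' \<longrightarrow> sum w T \<le> sum w T')"

definition comp :: "('e \<Rightarrow> 'v set) \<Rightarrow> 'e set \<Rightarrow> 'v \<Rightarrow> 'v set" where
  "comp ends S x = {y. (x, y) \<in> (adj ends S)\<^sup>*}"

definition components :: "'v set \<Rightarrow> ('e \<Rightarrow> 'v set) \<Rightarrow> 'e set \<Rightarrow> 'v set set" where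
  "components V ends S = comp ends S ` V"

text \<open>Endpoints of an edge in the contracted multigraph G'_cc (vertices = components).\<close>
definition ends_cc :: "'v set set \<Rightarrow> ('e \<Rightarrow> 'v set) \<Rightarrow> 'e \<Rightarrow> 'v set set" where
  "ends_cc Vcc ends e = {A \<in> Vcc. ends e \<inter> A \<noteq> {}}"

definition kmax :: "('a \<Rightarrow> nat) \<Rightarrow> 'a set \<Rightarrow> nat" where
  "kmax k S = Max (k ` S)"

definition pick :: "('a \<Rightarrow> nat) \<Rightarrow> 'a set \<Rightarrow> 'a set \<Rightarrow> 'a set" where
  "pick k Ls Rs = (if kmax k Ls \<le> kmax k Rs then Ls else Rs)"

primrec counters :: "(nat \<Rightarrow> 'a set) \<Rightarrow> (nat \<Rightarrow> 'a set) \<Rightarrow> nat \<Rightarrow> 'a \<Rightarrow> nat" where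
  "counters L R 0 = (\<lambda>A. 0)"
| "counters L R (Suc i) =
     (let X = pick (counters L R i) (L (Suc i)) (R (Suc i))
      in (\<lambda>A. counters L R i A + (if A \<in> X then 1 else 0)))"

text \<open>X_i for i >= 1.\<close>
definition Xset :: "(nat \<Rightarrow> 'a set) \<Rightarrow> (nat \<Rightarrow> 'a set) \<Rightarrow> nat \<Rightarrow> 'a set" where
  "Xset L R i = pick (counters L R (i - 1)) (L i) (R i)"

end

theory Submission
  imports Defs
begin

text \<open>Only the fact that \<open>X\<^sub>i\<close> is one of the two components \<open>L\<^sub>i\<close>, \<open>R\<^sub>i\<close> merged by \<open>e'\<^sub>i\<close> is
  used. Call a vertex untouched after step \<open>n\<close> if it lies in no
  \<open>X\<^sub>j\<close> with \<open>j \<le> n\<close>. By induction on \<open>n\<close>, every component of the forest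
  \<open>{e'\<^sub>1, \<dots>, e'\<^sub>n}\<close> contains an untouched vertex: at step \<open>n + 1\<close> the set
  \<open>X\<^sub>n\<^sub>+\<^sub>1\<close> is one of the two merged components, so the untouched vertex of the other one
  survives and serves the merged component. Applied to the component \<open>X\<^sub>i\<close> after step
  \<open>i - 1\<close>, this yields \<open>v\<^sub>i\<close>; applied after step \<open>t - 1\<close>, it yields \<open>u\<close>.\<close>

lemma sym_adj: "sym (adj ends S)"
  unfolding sym_def adj_def by (auto simp: insert_commute)

lemma self_in_comp: "x \<in> comp ends S x"
  by (simp add: comp_def)

lemma comp_sym:
  assumes "y \<in> comp ends S x"
  shows "x \<in> comp ends S y"
proof -
  have "(x, y) \<in> (adj ends S)\<^sup>*"
    using assms by (simp add: comp_def)
  then have "(y, x) \<in> (adj ends S)\<^sup>*"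
    by (rule symD[OF sym_rtrancl[OF sym_adj]])
  then show ?thesis
    by (simp add: comp_def)
qed

lemma comp_trans: "y \<in> comp ends S x \<Longrightarrow> z \<in> comp ends S y \<Longrightarrow> z \<in> comp ends S x"
  by (auto simp: comp_def)

lemma comp_eq_if_mem:
  assumes "y \<in> comp ends S x"
  shows "comp ends S y = comp ends S x"
  using comp_trans[OF assms] comp_trans[OF comp_sym[OF assms]] by (intro set_eqI iffI)

lemma comp_mono:
  assumes "S \<subseteq> S'"
  shows "comp ends S x \<subseteq> comp ends S' x"
proof -
  have "adj ends S \<subseteq> adj ends S'"
    using assms by (auto simp: adj_def)
  then show ?thesis
    unfolding comp_def using rtrancl_mono by blast
qed

lemma mem_comp_if_edge: "e \<in> S \<Longrightarrow> ends e = {x, y} \<Longrightarrow> y \<in> comp ends S x"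
  unfolding comp_def adj_def by blast

lemma forest_edge_not_in_comp:
  assumes "forest ends T" and "e \<in> T" and "S \<subseteq> T - {e}" and "ends e = {x, y}"
  shows "y \<notin> comp ends S x"
proof
  assume "y \<in> comp ends S x"
  then have "y \<in> comp ends (T - {e}) x"
    using comp_mono[OF assms(3), of ends x] by blast
  moreover have "(x, y) \<notin> (adj ends (T - {e}))\<^sup>*"
    using assms(1,2,4) unfolding forest_def by blast
  ultimately show False
    by (simp add: comp_def)
qed

lemma ends_cc_components:
  assumes "ends e \<subseteq> V"
  shows "ends_cc (components V ends S) ends e = comp ends S ` ends e"
proof -
  have "ends e \<inter> comp ends S x \<noteq> {} \<longleftrightarrow> comp ends S x \<in> comp ends S ` ends e" for x
  proof
    assume "ends e \<inter> comp ends S x \<noteq> {}"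
    then obtain a where "a \<in> ends e" "a \<in> comp ends S x"
      by blast
    then show "comp ends S x \<in> comp ends S ` ends e"
      by (metis comp_eq_if_mem image_eqI)
  next
    assume "comp ends S x \<in> comp ends S ` ends e"
    then obtain a where "a \<in> ends e" "comp ends S x = comp ends S a"
      by blast
    then show "ends e \<inter> comp ends S x \<noteq> {}"
      using self_in_comp by fastforce
  qed
  then show ?thesis
    using assms by (auto simp: ends_cc_def components_def)
qed

lemma ends_cc_components_doubleton:
  assumes "ends e \<subseteq> V" and "card (ends e) = 2"
  shows "\<exists>P\<in>components V ends S. \<exists>Q\<in>components V ends S.
           ends_cc (components V ends S) ends e = {P, Q}"
proof -
  obtain a b where ab: "ends e = {a, b}"
    using assms(2) by (auto simp: card_2_iff)
  then have "ends_cc (components V ends S) ends e = {comp ends S a, comp ends S b}"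
    using assms(1) by (simp add: ends_cc_components)
  then show ?thesis
    using ab assms(1) by (auto simp: components_def)
qed

definition merging_sequence :: "('e \<Rightarrow> 'v set) \<Rightarrow> 'v set \<Rightarrow> (nat \<Rightarrow> 'e) \<Rightarrow> nat \<Rightarrow> bool" where
  "merging_sequence ends W f n \<longleftrightarrow>
     (\<forall>i\<in>{1..n}. ends (f i) \<subseteq> W \<and>
        (\<exists>P Q. ends (f i) = {P, Q} \<and> Q \<notin> comp ends (f ` {1..<i}) P))"

lemma merging_sequence_le:
  "merging_sequence ends W f n \<Longrightarrow> m \<le> n \<Longrightarrow> merging_sequence ends W f m"
  by (simp add: merging_sequence_def)

lemma merging_sequence_if_forest:
  assumes forest: "forest ends T" and bij: "bij_betw f {1..n} T"
    and ends_T: "\<And>e. e \<in> T \<Longrightarrow> \<exists>x\<in>W. \<exists>y\<in>W. ends e = {x, y}"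
  shows "merging_sequence ends W f n"
  unfolding merging_sequence_def
proof
  fix i assume i: "i \<in> {1..n}"
  have fi: "f i \<in> T"
    using bij_betwE[OF bij] i by blast
  then obtain x y where xy: "x \<in> W" "y \<in> W" "ends (f i) = {x, y}"
    using ends_T by blast
  have "f ` ({1..n} - {i}) = f ` {1..n} - f ` {i}"
    using bij i by (intro inj_on_image_set_diff) (auto simp: bij_betw_def)
  then have "f ` ({1..n} - {i}) = T - {f i}"
    using bij by (simp add: bij_betw_def)
  moreover have "{1..<i} \<subseteq> {1..n} - {i}"
    using i by auto
  ultimately have "f ` {1..<i} \<subseteq> T - {f i}"
    by (metis image_mono)
  then have "y \<notin> comp ends (f ` {1..<i}) x"
    by (rule forest_edge_not_in_comp[OF forest fi _ xy(3)])
  then show "ends (f i) \<subseteq> W \<and> (\<exists>P Q. ends (f i) = {P, Q} \<and> Q \<notin> comp ends (f ` {1..<i}) P)"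
    using xy by fastforce
qed

lemma untouched_vertex_after_merge:
  assumes PQ: "ends e = {P, Q}" "Q \<notin> comp ends S P"
    and untouched: "\<And>A'. A' \<in> W \<Longrightarrow> \<exists>B\<in>W \<inter> comp ends S A'. U B"
    and "Q \<in> W" and "A \<in> W"
  shows "\<exists>B\<in>W \<inter> comp ends (insert e S) A. U B \<and> B \<notin> comp ends S P"
proof -
  have mono: "comp ends S A' \<subseteq> comp ends (insert e S) A'" for A'
    by (rule comp_mono) blast
  obtain B where B: "B \<in> W" "B \<in> comp ends S A" "U B"
    using untouched[OF \<open>A \<in> W\<close>] by blast
  show ?thesis
  proof (cases "B \<in> comp ends S P")
    case False
    then show ?thesis
      using B mono[of A] by blast
  next
    case True
    \<comment> \<open>\<open>A\<close> lies in the component of \<open>P\<close>; the one of \<open>Q\<close>, now joined to it, supplies the witness.\<close>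
    obtain B' where B': "B' \<in> W" "B' \<in> comp ends S Q" "U B'"
      using untouched[OF \<open>Q \<in> W\<close>] by blast
    have "B' \<notin> comp ends S P"
    proof
      assume "B' \<in> comp ends S P"
      then have "Q \<in> comp ends S P"
        using comp_trans[OF _ comp_sym[OF B'(2)]] by blast
      then show False
        using PQ(2) by blast
    qed
    moreover have "B' \<in> comp ends (insert e S) A"
    proof -
      have "P \<in> comp ends (insert e S) A"
        using comp_trans[OF B(2) comp_sym[OF True]] mono[of A] by blast
      moreover have "Q \<in> comp ends (insert e S) P"
        using PQ(1) by (intro mem_comp_if_edge) auto
      moreover have "B' \<in> comp ends (insert e S) Q"
        using B'(2) mono[of Q] by blast
      ultimately show ?thesis
        by (rule comp_trans[OF comp_trans])
    qed
    ultimately show ?thesis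
      using B' by blast
  qed
qed

lemma untouched_vertex_in_comp:
  assumes "merging_sequence ends W f n"
    and X: "\<And>i. i \<in> {1..n} \<Longrightarrow> X i \<in> comp ends (f ` {1..<i}) ` ends (f i)"
    and "A \<in> W"
  shows "\<exists>B \<in> W \<inter> comp ends (f ` {1..n}) A. \<forall>j\<in>{1..n}. B \<notin> X j"
  using assms
proof (induction n arbitrary: A)
  case 0
  then show ?case
    using self_in_comp by fastforce
next
  case (Suc n)
  define S where "S = f ` {1..n}"
  define U where "U B \<longleftrightarrow> (\<forall>j\<in>{1..n}. B \<notin> X j)" for B
  have merging: "merging_sequence ends W f n"
    using Suc.prems(1) by (rule merging_sequence_le) simp
  have X_n: "X i \<in> comp ends (f ` {1..<i}) ` ends (f i)" if "i \<in> {1..n}" for i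
    by (rule Suc.prems(2)) (use that in simp)
  have IH: "\<exists>B \<in> W \<inter> comp ends S A'. U B" if "A' \<in> W" for A'
    using Suc.IH[OF merging X_n that] unfolding S_def U_def .
  have last: "Suc n \<in> {1..Suc n}" and prev: "{1..<Suc n} = {1..n}"
    by auto
  obtain P Q where PQ: "ends (f (Suc n)) = {P, Q}" "Q \<notin> comp ends S P" "P \<in> W" "Q \<in> W"
    using bspec[OF Suc.prems(1)[unfolded merging_sequence_def] last]
    unfolding prev S_def by blast
  have "X (Suc n) \<in> comp ends S ` {P, Q}"
    using Suc.prems(2)[OF last] PQ(1) unfolding prev S_def by simp
  then consider "X (Suc n) = comp ends S P" | "X (Suc n) = comp ends S Q"
    by blast
  then obtain B where B: "B \<in> W \<inter> comp ends (insert (f (Suc n)) S) A" "U B" "B \<notin> X (Suc n)"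
  proof cases
    case 1
    then show thesis
      using untouched_vertex_after_merge[OF PQ(1,2) IH PQ(4) Suc.prems(3)] that by blast
  next
    case 2
    moreover have "ends (f (Suc n)) = {Q, P}" "P \<notin> comp ends S Q"
      using PQ(1,2) comp_sym[of P ends S Q] by (auto simp: insert_commute)
    ultimately show thesis
      using untouched_vertex_after_merge[of ends "f (Suc n)" Q P, OF _ _ IH PQ(3) Suc.prems(3)] that by blast
  qed
  moreover have "insert (f (Suc n)) S = f ` {1..Suc n}"
    by (auto simp: S_def atLeastAtMostSuc_conv)
  ultimately show ?case
    by (auto simp: U_def atLeastAtMostSuc_conv)
qed

lemma newly_touched_vertex:
  assumes "merging_sequence ends W f n"
    and X: "\<And>i. i \<in> {1..n} \<Longrightarrow> X i \<in> comp ends (f ` {1..<i}) ` ends (f i)"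
    and i: "i \<in> {1..n}"
  shows "\<exists>v\<in>W. v \<in> X i \<and> (\<forall>j\<in>{1..<i}. v \<notin> X j)"
proof -
  obtain m where m: "i = Suc m"
    using i by (cases i) auto
  obtain P where P: "P \<in> ends (f i)" "X i = comp ends (f ` {1..m}) P"
    using X[OF i] by (auto simp: m atLeastLessThanSuc_atLeastAtMost)
  have "P \<in> W"
    using assms(1) i P(1) by (auto simp: merging_sequence_def)
  moreover have "merging_sequence ends W f m"
    using assms(1) by (rule merging_sequence_le) (use i m in simp)
  moreover have "X j \<in> comp ends (f ` {1..<j}) ` ends (f j)" if "j \<in> {1..m}" for j
    using X that i m by simp
  ultimately obtain v where "v \<in> W \<inter> comp ends (f ` {1..m}) P" "\<forall>j\<in>{1..m}. v \<notin> X j"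
    using untouched_vertex_in_comp[of ends W f m X P] by blast
  then show ?thesis
    using P(2) by (auto simp: m atLeastLessThanSuc_atLeastAtMost)
qed

theorem mainTheorem11:
  fixes V :: "'v set" and E :: "'e set" and ends :: "'e \<Rightarrow> 'v set"
    and w :: "'e \<Rightarrow> real" and c :: "'e \<Rightarrow> real" and F :: "'e set"
    and T :: "'e set" and t :: nat and Tcc :: "'e set"
    and e' :: "nat \<Rightarrow> 'e" and L R :: "nat \<Rightarrow> 'v set set"
  assumes finV: "finite V" and finE: "finite E"
    and ends_ok: "\<forall>e\<in>E. ends e \<subseteq> V \<and> card (ends e) = 2"
    and connG: "conn V ends E"
    and w_nonneg: "\<forall>e\<in>E. w e \<ge> 0" and c_pos: "\<forall>e\<in>E. c e > 0"
    and F_sub: "F \<subseteq> E" and connG': "conn V ends (E - F)"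
    and T_MST: "is_MST V E ends w T"
    and t_ge: "t \<ge> 2" and TF_card: "card (T \<inter> F) = t - 1"
    and Tcc_MST: "is_MST (components V ends (T - F)) (E - F)
                    (ends_cc (components V ends (T - F)) ends) w Tcc"
    and e'_bij: "bij_betw e' {1..t-1} Tcc"
    and e'_sorted: "\<forall>i j. 1 \<le> i \<longrightarrow> i \<le> j \<longrightarrow> j \<le> t - 1 \<longrightarrow> w (e' i) \<le> w (e' j)"
    and LR: "\<forall>i\<in>{1..t-1}. {L i, R i} =
               comp (ends_cc (components V ends (T - F)) ends) (e' ` {1..<i})
                 ` ends_cc (components V ends (T - F)) ends (e' i)"
  shows "(\<forall>i\<in>{1..t-1}. \<exists>v\<in>components V ends (T - F).
            v \<in> Xset L R i \<and> (\<forall>j\<in>{1..<i}. v \<notin> Xset L R j))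
       \<and> (\<exists>u\<in>components V ends (T - F). \<forall>j\<in>{1..t-1}. u \<notin> Xset L R j)"
proof -
  define Vcc where "Vcc = components V ends (T - F)"
  define EC where "EC = ends_cc Vcc ends"
  have Tcc_sub: "Tcc \<subseteq> E - F" and forest: "forest EC Tcc"
    using Tcc_MST unfolding is_MST_def spanning_tree_def Vcc_def EC_def by blast+
  have Tcc_ends: "\<exists>P\<in>Vcc. \<exists>Q\<in>Vcc. EC e = {P, Q}" if "e \<in> Tcc" for e
    using that Tcc_sub ends_ok unfolding EC_def Vcc_def
    by (intro ends_cc_components_doubleton) auto
  have merging: "merging_sequence EC Vcc e' (t - 1)"
    using forest e'_bij Tcc_ends by (rule merging_sequence_if_forest)
  have X: "Xset L R i \<in> comp EC (e' ` {1..<i}) ` EC (e' i)" if "i \<in> {1..t-1}" for i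
  proof -
    have "Xset L R i \<in> {L i, R i}"
      by (simp add: Xset_def pick_def)
    then show ?thesis
      using bspec[OF LR that] unfolding EC_def Vcc_def by simp
  qed
  have "e' 1 \<in> Tcc"
    using bij_betwE[OF e'_bij] t_ge by simp
  then obtain P where "P \<in> Vcc"
    using Tcc_ends by blast
  then obtain u where "u \<in> Vcc" "\<forall>j\<in>{1..t-1}. u \<notin> Xset L R j"
    using untouched_vertex_in_comp[OF merging X] by blast
  moreover have "\<forall>i\<in>{1..t-1}. \<exists>v\<in>Vcc. v \<in> Xset L R i \<and> (\<forall>j\<in>{1..<i}. v \<notin> Xset L R j)"
    using newly_touched_vertex[OF merging X] by blast
  ultimately show ?thesis
    unfolding Vcc_def by blast
qed

end
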